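(* Let $G$ be a group definable in a model $M$ of an NIP theory, and let $\mu$ be a translation-invariant Keisler measure on the definable subsets of $G$. Then for every $g\in G$, the translation $U\mapsto g\cdot U$ has entropy zero with respect to $\mu$.
   Context: A Keisler measure on the definable subsets of $G$ (with parameters from $M$) is a finitely additive probability measure on them; invariance means $\mu(gU)=\mu(U)$ for all $g\in G$ and definable $U\subseteq G$. Entropy is the measure-theoretic (Kolmogorov–Sinai) entropy: for a finite partition $P$, $h(\tau,P)=\lim_n\frac1n H(\bigvee_{i=0}^{n-1}\tau^{-i}P)$ with $H(Q)=-\sum_{C\in Q}\mu(C)\log\mu(C)$, and the entropy of $\tau$ is the supremum over partitions. *)

theory Defs
  imports Complex_Main "HOL-Algebra.Group"
begin

text \<open>A first-order structure M with universe the type 'a and a relational language: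
  relation symbols of type 'r, arity ar, interpretation Rel (tuples as lists).
  (Function symbols and constants are represented by their graphs; this does not
  change the definable sets.)  Points of M^n are lists of length n.\<close>

inductive definable :: "('r \<Rightarrow> nat) \<Rightarrow> ('r \<Rightarrow> 'a list set) \<Rightarrow> nat \<Rightarrow> 'a list set \<Rightarrow> bool"
  for ar :: "'r \<Rightarrow> nat" and Rel :: "'r \<Rightarrow> 'a list set" where
  atom: "definable ar Rel (ar r) (Rel r \<inter> {xs. length xs = ar r})"
| diag: "i < n \<Longrightarrow> j < n \<Longrightarrow> definable ar Rel n {xs. length xs = n \<and> xs ! i = xs ! j}"
| param: "definable ar Rel 1 {[c]}"
| compl: "definable ar Rel n D \<Longrightarrow> definable ar Rel n ({xs. length xs = n} - D)"
| inter: "definable ar Rel n A \<Longrightarrow> definable ar Rel n B \<Longrightarrow> definable ar Rel n (A \<inter> B)"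
| cyl: "definable ar Rel n D \<Longrightarrow>
        definable ar Rel (Suc n) {xs. length xs = Suc n \<and> take n xs \<in> D}"
| perm: "definable ar Rel n D \<Longrightarrow> bij_betw p {..<n} {..<n} \<Longrightarrow>
        definable ar Rel n {xs. length xs = n \<and> map (\<lambda>i. xs ! p i) [0..<n] \<in> D}"
| proj: "definable ar Rel (Suc n) D \<Longrightarrow>
        definable ar Rel n {xs. length xs = n \<and> (\<exists>a. xs @ [a] \<in> D)}"

definition shatters :: "'b set set \<Rightarrow> 'b set \<Rightarrow> bool" where
  "shatters F A \<longleftrightarrow> (\<forall>B \<subseteq> A. \<exists>S \<in> F. S \<inter> A = B)"

definition NIP :: "('r \<Rightarrow> nat) \<Rightarrow> ('r \<Rightarrow> 'a list set) \<Rightarrow> bool" where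
  "NIP ar Rel \<longleftrightarrow>
     (\<forall>n m D. definable ar Rel (n + m) D \<longrightarrow>
        (\<exists>d::nat. \<forall>A. finite A \<and>
           shatters {{xs. length xs = n \<and> xs @ ys \<in> D} | ys. length ys = m} A
           \<longrightarrow> card A \<le> d))"

definition definable_group ::
  "('r \<Rightarrow> nat) \<Rightarrow> ('r \<Rightarrow> 'a list set) \<Rightarrow> nat \<Rightarrow> 'a list monoid \<Rightarrow> bool" where
  "definable_group ar Rel n Gr \<longleftrightarrow>
     group Gr \<and> carrier Gr \<subseteq> {xs. length xs = n} \<and>
     definable ar Rel n (carrier Gr) \<and>
     definable ar Rel (n + n + n)
       {xs @ ys @ zs | xs ys zs. xs \<in> carrier Gr \<and> ys \<in> carrier Gr \<and> zs = xs \<otimes>\<^bsub>Gr\<^esub> ys}"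

definition def_subset ::
  "('r \<Rightarrow> nat) \<Rightarrow> ('r \<Rightarrow> 'a list set) \<Rightarrow> nat \<Rightarrow> 'a list monoid \<Rightarrow> 'a list set \<Rightarrow> bool" where
  "def_subset ar Rel n Gr U \<longleftrightarrow> definable ar Rel n U \<and> U \<subseteq> carrier Gr"

definition keisler_measure ::
  "('r \<Rightarrow> nat) \<Rightarrow> ('r \<Rightarrow> 'a list set) \<Rightarrow> nat \<Rightarrow> 'a list monoid \<Rightarrow> ('a list set \<Rightarrow> real) \<Rightarrow> bool" where
  "keisler_measure ar Rel n Gr \<mu> \<longleftrightarrow>
     \<mu> (carrier Gr) = 1 \<and>
     (\<forall>U. def_subset ar Rel n Gr U \<longrightarrow> 0 \<le> \<mu> U) \<and>
     (\<forall>U V. def_subset ar Rel n Gr U \<and> def_subset ar Rel n Gr V \<and> U \<inter> V = {}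
        \<longrightarrow> \<mu> (U \<union> V) = \<mu> U + \<mu> V)"

definition translate :: "'a list monoid \<Rightarrow> 'a list \<Rightarrow> 'a list set \<Rightarrow> 'a list set" where
  "translate Gr g U = (\<lambda>x. g \<otimes>\<^bsub>Gr\<^esub> x) ` U"

definition invariant_measure ::
  "('r \<Rightarrow> nat) \<Rightarrow> ('r \<Rightarrow> 'a list set) \<Rightarrow> nat \<Rightarrow> 'a list monoid \<Rightarrow> ('a list set \<Rightarrow> real) \<Rightarrow> bool" where
  "invariant_measure ar Rel n Gr \<mu> \<longleftrightarrow>
     (\<forall>g U. g \<in> carrier Gr \<and> def_subset ar Rel n Gr U \<longrightarrow> \<mu> (translate Gr g U) = \<mu> U)"

definition def_partition ::
  "('r \<Rightarrow> nat) \<Rightarrow> ('r \<Rightarrow> 'a list set) \<Rightarrow> nat \<Rightarrow> 'a list monoid \<Rightarrow> 'a list set set \<Rightarrow> bool" where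
  "def_partition ar Rel n Gr P \<longleftrightarrow>
     finite P \<and> (\<forall>C \<in> P. def_subset ar Rel n Gr C) \<and> \<Union>P = carrier Gr \<and> pairwise disjnt P"

text \<open>Join of tau^{-i} P for i < k, where tau(U) = g U, so tau^{-i}(C) = g^{-i} C.\<close>
definition join_iter :: "'a list monoid \<Rightarrow> 'a list \<Rightarrow> 'a list set set \<Rightarrow> nat \<Rightarrow> 'a list set set" where
  "join_iter Gr g P k =
     {carrier Gr \<inter> (\<Inter>i \<in> {..<k}. translate Gr (inv\<^bsub>Gr\<^esub> g [^]\<^bsub>Gr\<^esub> i) (f i)) | f. \<forall>i<k. f i \<in> P}"

definition part_entropy :: "('a list set \<Rightarrow> real) \<Rightarrow> 'a list set set \<Rightarrow> real" where
  "part_entropy \<mu> Q = - (\<Sum>C \<in> Q. if \<mu> C = 0 then 0 else \<mu> C * ln (\<mu> C))"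

definition zero_entropy ::
  "('r \<Rightarrow> nat) \<Rightarrow> ('r \<Rightarrow> 'a list set) \<Rightarrow> nat \<Rightarrow> 'a list monoid \<Rightarrow> ('a list set \<Rightarrow> real) \<Rightarrow> 'a list \<Rightarrow> bool" where
  "zero_entropy ar Rel n Gr \<mu> g \<longleftrightarrow>
     (\<forall>P. def_partition ar Rel n Gr P \<longrightarrow>
        (\<lambda>k. part_entropy \<mu> (join_iter Gr g P k) / real k) \<longlonglongrightarrow> 0)"

end

theory Submission
  imports Defs
begin

text \<open>The cells of the \<open>k\<close>-th join of a definable partition \<open>P\<close> are the sets of points
  \<open>x\<close> with a prescribed itinerary \<open>g\<^sup>i x \<in> f i\<close> for \<open>i < k\<close>. A nonempty cell is determined
  by the traces \<open>{g\<^sup>i | i < k, g\<^sup>i x \<in> C}\<close> for \<open>C \<in> P\<close>, and each of them is the trace on the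
  \<open>k\<close>-element set \<open>{g\<^sup>i | i < k}\<close> of the definable family \<open>{y | y x \<in> C}\<close> with parameter \<open>x\<close>.
  By NIP this family has finite VC dimension, so by the Sauer--Shelah lemma the join has only
  polynomially many cells in \<open>k\<close>. Its entropy is therefore \<open>O(log k)\<close>, and the entropy
  divided by \<open>k\<close> tends to \<open>0\<close>.\<close>

section \<open>Closure properties of definable sets\<close>

lemma definable_subset_lists: "definable ar Rel n D \<Longrightarrow> D \<subseteq> {xs. length xs = n}"
  by (induction rule: definable.induct) auto

lemma definable_lists: "definable ar Rel n {xs. length xs = n}"
proof (induction n)
  case 0
  have "definable ar Rel 0 {xs. length xs = 0 \<and> (\<exists>a. xs @ [a] \<in> {[undefined]})}"
    using definable.proj[of ar Rel 0 "{[undefined]}"] definable.param[of ar Rel undefined] by simp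
  moreover have "{xs. length xs = 0 \<and> (\<exists>a. xs @ [a] \<in> {[undefined]})} = {xs. length xs = 0}"
    by auto
  ultimately show ?case by simp
next
  case (Suc n)
  have eq: "{xs. length xs = Suc n \<and> take n xs \<in> {xs. length xs = n}} = {xs. length xs = Suc n}"
    by auto
  from definable.cyl[OF Suc.IH] show ?case unfolding eq .
qed

lemma definable_empty: "definable ar Rel n {}"
  using definable.compl[OF definable_lists] by simp

lemma definable_Un:
  assumes "definable ar Rel n A" and "definable ar Rel n B"
  shows "definable ar Rel n (A \<union> B)"
proof -
  let ?L = "{xs. length xs = n}"
  have "definable ar Rel n (?L - ((?L - A) \<inter> (?L - B)))"
    by (intro definable.inter definable.compl assms)
  moreover have "?L - ((?L - A) \<inter> (?L - B)) = A \<union> B"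
    using definable_subset_lists[OF assms(1)] definable_subset_lists[OF assms(2)] by auto
  ultimately show ?thesis by simp
qed

lemma definable_Int_INT:
  "definable ar Rel n A \<Longrightarrow> (\<And>i. i < k \<Longrightarrow> definable ar Rel n (B i)) \<Longrightarrow>
   definable ar Rel n (A \<inter> (\<Inter>i<(k::nat). B i))"
proof (induction k)
  case (Suc k)
  have "definable ar Rel n ((A \<inter> (\<Inter>i<k. B i)) \<inter> B k)"
    using Suc.prems by (intro definable.inter Suc.IH) auto
  moreover have "(A \<inter> (\<Inter>i<k. B i)) \<inter> B k = A \<inter> (\<Inter>i<Suc k. B i)"
    by (auto simp: lessThan_Suc)
  ultimately show ?case by simp
qed simp

lemma definable_swap:
  assumes "definable ar Rel (a + b) D"
  shows "definable ar Rel (b + a) {ws. length ws = b + a \<and> drop b ws @ take b ws \<in> D}"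
proof -
  define p where "p i = (if i < a then i + b else i - a)" for i
  have "bij_betw p {..<b + a} {..<b + a}"
    by (rule bij_betwI[where g = "\<lambda>i. if i < b then i + a else i - b"]) (auto simp: p_def)
  from definable.perm[OF _ this] assms
  have perm: "definable ar Rel (b + a) {ws. length ws = b + a \<and> map (\<lambda>i. ws ! p i) [0..<b + a] \<in> D}"
    by (simp add: add.commute)
  have map_eq: "map (\<lambda>i. ws ! p i) [0..<b + a] = drop b ws @ take b ws"
    if "length ws = b + a" for ws
    using that by (intro nth_equalityI) (auto simp: p_def nth_append add.commute)
  have "{ws. length ws = b + a \<and> map (\<lambda>i. ws ! p i) [0..<b + a] \<in> D}
      = {ws. length ws = b + a \<and> drop b ws @ take b ws \<in> D}"
    by (intro Collect_cong conj_cong refl) (simp only: map_eq)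
  with perm show ?thesis by simp
qed

lemma definable_take_prefix:
  assumes "definable ar Rel n D"
  shows "definable ar Rel (n + j) {ws. length ws = n + j \<and> take n ws \<in> D}"
proof (induction j)
  case 0
  have "{ws. length ws = n + 0 \<and> take n ws \<in> D} = D"
    using definable_subset_lists[OF assms] by auto
  then show ?case using assms by simp
next
  case (Suc j)
  have "{ws. length ws = Suc (n + j) \<and> take (n + j) ws \<in> {ws. length ws = n + j \<and> take n ws \<in> D}}
      = {ws. length ws = n + Suc j \<and> take n ws \<in> D}"
    by (auto simp: min_def)
  then show ?case using definable.cyl[OF Suc.IH] by simp
qed

lemma definable_drop_prefix:
  assumes "definable ar Rel n D"
  shows "definable ar Rel (j + n) {ws. length ws = j + n \<and> drop j ws \<in> D}"
proof -
  have eq: "{ws. length ws = j + n \<and> drop j ws @ take j ws \<in> {ws. length ws = n + j \<and> take n ws \<in> D}}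
      = {ws. length ws = j + n \<and> drop j ws \<in> D}"
    by auto
  from definable_swap[OF definable_take_prefix[OF assms, of j]] show ?thesis unfolding eq .
qed

lemma definable_exists_suffix:
  "definable ar Rel (n + k) D \<Longrightarrow>
   definable ar Rel n {xs. length xs = n \<and> (\<exists>zs. length zs = k \<and> xs @ zs \<in> D)}"
proof (induction k arbitrary: D)
  case 0
  have "{xs. length xs = n \<and> (\<exists>zs. length zs = 0 \<and> xs @ zs \<in> D)} = D"
    using definable_subset_lists[OF 0[simplified]] by auto
  then show ?case using 0 by simp
next
  case (Suc k)
  have "definable ar Rel (n + k) {xs. length xs = n + k \<and> (\<exists>a. xs @ [a] \<in> D)}"
    using definable.proj[of ar Rel "n + k" D] Suc.prems by simp
  note Suc.IH[OF this]
  moreover have "{xs. length xs = n \<and> (\<exists>zs. length zs = k \<and> xs @ zs \<in> {xs. length xs = n + k \<and> (\<exists>a. xs @ [a] \<in> D)})}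
     = {xs. length xs = n \<and> (\<exists>zs. length zs = Suc k \<and> xs @ zs \<in> D)}"
    by (auto simp: length_Suc_conv_rev)
  ultimately show ?case by simp
qed

lemma definable_singleton: "definable ar Rel (length b) {b}"
proof (induction b rule: rev_induct)
  case Nil
  show ?case using definable_lists[of ar Rel 0] by simp
next
  case (snoc c b)
  have "definable ar Rel (length b + 1)
      ({ws. length ws = length b + 1 \<and> take (length b) ws \<in> {b}} \<inter>
       {ws. length ws = length b + 1 \<and> drop (length b) ws \<in> {[c]}})"
    by (intro definable.inter definable_take_prefix definable_drop_prefix snoc.IH definable.param)
  moreover have "{ws. length ws = length b + 1 \<and> take (length b) ws \<in> {b}} \<inter>
       {ws. length ws = length b + 1 \<and> drop (length b) ws \<in> {[c]}} = {b @ [c]}"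
    by auto (metis append_take_drop_id)
  ultimately show ?case by simp
qed

lemma definable_fix_suffix:
  assumes "definable ar Rel (n + length b) D"
  shows "definable ar Rel n {xs. length xs = n \<and> xs @ b \<in> D}"
proof -
  let ?D' = "D \<inter> {ws. length ws = n + length b \<and> drop n ws \<in> {b}}"
  have "definable ar Rel (n + length b) ?D'"
    by (intro definable.inter assms definable_drop_prefix definable_singleton)
  moreover have "{xs. length xs = n \<and> (\<exists>zs. length zs = length b \<and> xs @ zs \<in> ?D')}
      = {xs. length xs = n \<and> xs @ b \<in> D}"
    by (intro Collect_cong) auto
  ultimately show ?thesis
    using definable_exists_suffix[of ar Rel n "length b" ?D'] by simp
qed

lemma definable_fix_prefix:
  assumes "definable ar Rel (length b + n) D"
  shows "definable ar Rel n {xs. length xs = n \<and> b @ xs \<in> D}"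
proof -
  have eq: "{xs. length xs = n \<and> xs @ b \<in> {ws. length ws = n + length b \<and> drop n ws @ take n ws \<in> D}}
      = {xs. length xs = n \<and> b @ xs \<in> D}"
    by auto
  have "definable ar Rel n
      {xs. length xs = n \<and> xs @ b \<in> {ws. length ws = n + length b \<and> drop n ws @ take n ws \<in> D}}"
    by (intro definable_fix_suffix definable_swap assms)
  then show ?thesis unfolding eq .
qed

section \<open>The Sauer--Shelah lemma\<close>

lemma shatters_remove_elem:
  assumes "x \<notin> B" and "shatters ((\<lambda>t. t - {x}) ` T) B"
  shows "shatters T B"
  unfolding shatters_def
proof (intro allI impI)
  fix B' assume "B' \<subseteq> B"
  then obtain t where "t \<in> T" and "(t - {x}) \<inter> B = B'"
    using assms(2) unfolding shatters_def by blast
  then show "\<exists>S\<in>T. S \<inter> B = B'" using assms(1) by blast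
qed

lemma shatters_insert_elem:
  assumes "x \<notin> B" and "shatters {t \<in> T. x \<notin> t \<and> insert x t \<in> T} B"
  shows "shatters T (insert x B)"
  unfolding shatters_def
proof (intro allI impI)
  fix B' assume B': "B' \<subseteq> insert x B"
  then have "B' - {x} \<subseteq> B" by blast
  then obtain t where t: "t \<in> T" "x \<notin> t" "insert x t \<in> T" and tB: "t \<inter> B = B' - {x}"
    using assms(2) unfolding shatters_def by blast
  show "\<exists>S\<in>T. S \<inter> insert x B = B'"
  proof (cases "x \<in> B'")
    case True
    then have "insert x t \<inter> insert x B = B'" using tB B' by blast
    then show ?thesis using t(3) by blast
  next
    case False
    then have "t \<inter> insert x B = B'" using tB t(2) B' by blast
    then show ?thesis using t(1) by blast
  qed
qed

lemma card_split_by_elem: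
  assumes "finite T"
  shows "card T = card ((\<lambda>t. t - {x}) ` T) + card {t \<in> T. x \<notin> t \<and> insert x t \<in> T}"
proof -
  let ?Ta = "{t \<in> T. x \<notin> t}" and ?Tx = "{t \<in> T. x \<in> t}"
  let ?Tb = "(\<lambda>t. t - {x}) ` ?Tx"
  have "card T = card ?Ta + card ?Tx"
    using assms by (subst card_Un_disjoint[symmetric]) (auto intro: arg_cong[where f = card])
  also have "card ?Tx = card ?Tb"
    by (rule card_image[symmetric]) (auto simp: inj_on_def)
  also have "card ?Ta + card ?Tb = card (?Ta \<union> ?Tb) + card (?Ta \<inter> ?Tb)"
    using assms by (intro card_Un_Int) simp_all
  also have "?Ta \<union> ?Tb = (\<lambda>t. t - {x}) ` T"
  proof (intro equalityI subsetI)
    fix s assume "s \<in> (\<lambda>t. t - {x}) ` T"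
    then obtain t where "t \<in> T" "s = t - {x}" by blast
    then show "s \<in> ?Ta \<union> ?Tb"
      by (cases "x \<in> t") auto
  qed force
  also have "?Ta \<inter> ?Tb = {t \<in> T. x \<notin> t \<and> insert x t \<in> T}"
  proof (intro equalityI subsetI)
    fix t assume "t \<in> ?Ta \<inter> ?Tb"
    then obtain s where "s \<in> T" "x \<in> s" "t = s - {x}" "t \<in> T" by blast
    then show "t \<in> {t \<in> T. x \<notin> t \<and> insert x t \<in> T}"
      by (simp add: insert_absorb)
  qed (auto intro!: image_eqI[where x = "insert x _"])
  finally show ?thesis .
qed

lemma card_le_card_shattered_subsets:
  assumes "finite A" and "T \<subseteq> Pow A"
  shows "card T \<le> card {B. B \<subseteq> A \<and> shatters T B}"
  using assms
proof (induction A arbitrary: T rule: finite_induct)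
  case empty
  show ?case
  proof (cases "T = {}")
    case False
    then have "T = {{}}" using empty by auto
    then have "{{}} \<subseteq> {B. B \<subseteq> {} \<and> shatters T B}" by (simp add: shatters_def)
    from card_mono[OF _ this] show ?thesis using \<open>T = {{}}\<close> by simp
  qed simp
next
  case (insert x A)
  let ?T1 = "(\<lambda>t. t - {x}) ` T" and ?T2 = "{t \<in> T. x \<notin> t \<and> insert x t \<in> T}"
  let ?S = "\<lambda>T. {B. B \<subseteq> A \<and> shatters T B}"
  let ?U = "{B. B \<subseteq> insert x A \<and> shatters T B \<and> x \<notin> B}"
  let ?V = "{B. B \<subseteq> insert x A \<and> shatters T B \<and> x \<in> B}"
  have fin: "finite (Pow (insert x A))"
    using insert.hyps by simp
  have finU: "finite ?U" and finV: "finite ?V"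
    by (rule finite_subset[OF _ fin], blast)+
  have T1: "?T1 \<subseteq> Pow A" and T2: "?T2 \<subseteq> Pow A"
    using insert.prems by blast+
  have inj: "inj_on (insert x) (?S ?T2)"
  proof (rule inj_onI)
    fix B B' assume "B \<in> ?S ?T2" "B' \<in> ?S ?T2" "insert x B = insert x B'"
    moreover from this have "x \<notin> B" "x \<notin> B'"
      using insert.hyps(2) by auto
    ultimately show "B = B'"
      by (metis insert_ident)
  qed
  have "card T = card ?T1 + card ?T2"
    using insert.prems by (intro card_split_by_elem finite_subset[OF _ fin])
  also have "\<dots> \<le> card (?S ?T1) + card (?S ?T2)"
    using insert.IH[OF T1] insert.IH[OF T2] by (rule add_mono)
  also have "card (?S ?T2) = card (insert x ` ?S ?T2)"
    using inj by (rule card_image[symmetric])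
  also have "card (?S ?T1) + card (insert x ` ?S ?T2) \<le> card ?U + card ?V"
  proof (rule add_mono; rule card_mono)
    show "?S ?T1 \<subseteq> ?U"
    proof
      fix B assume B: "B \<in> ?S ?T1"
      then have "x \<notin> B"
        using insert.hyps(2) by blast
      with B show "B \<in> ?U"
        using shatters_remove_elem[of x B T] by blast
    qed
    show "insert x ` ?S ?T2 \<subseteq> ?V"
    proof
      fix B' assume "B' \<in> insert x ` ?S ?T2"
      then obtain B where B: "B \<in> ?S ?T2" and B': "B' = insert x B"
        by blast
      then have "x \<notin> B"
        using insert.hyps(2) by blast
      with B B' show "B' \<in> ?V"
        using shatters_insert_elem[of x B T] by blast
    qed
  qed (fact finU finV)+
  also have "card ?U + card ?V = card (?U \<union> ?V)"
    using finU finV by (rule card_Un_disjoint[symmetric]) blast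
  also have "?U \<union> ?V = {B. B \<subseteq> insert x A \<and> shatters T B}"
    by blast
  finally show ?case .
qed

lemma card_subsets_card_le:
  assumes "finite A"
  shows "card {B. B \<subseteq> A \<and> card B \<le> d} \<le> (card A + 1) ^ d"
proof (induction d)
  case 0
  have "{B. B \<subseteq> A \<and> card B \<le> 0} = {{}}"
    using assms by (auto simp: card_eq_0_iff dest: finite_subset)
  then show ?case by simp
next
  case (Suc d)
  let ?X = "\<lambda>d. {B. B \<subseteq> A \<and> card B \<le> d}"
  have fin: "finite (?X d)" using assms by simp
  have "?X (Suc d) \<subseteq> ?X d \<union> (\<lambda>(a, B). insert a B) ` (A \<times> ?X d)"
  proof
    fix B assume B: "B \<in> ?X (Suc d)"
    show "B \<in> ?X d \<union> (\<lambda>(a, B). insert a B) ` (A \<times> ?X d)"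
    proof (cases "card B \<le> d")
      case False
      then obtain a where "a \<in> B" using B by fastforce
      moreover have "finite B" using B assms finite_subset by auto
      ultimately have "(a, B - {a}) \<in> A \<times> ?X d" and "B = insert a (B - {a})"
        using B False by auto
      then show ?thesis by (auto simp: image_iff)
    qed (use B in blast)
  qed
  then have "card (?X (Suc d)) \<le> card (?X d) + card (A \<times> ?X d)"
    using assms fin
    by (meson card_Un_le card_image_le card_mono finite_SigmaI finite_UnI finite_imageI le_trans add_left_mono)
  also have "\<dots> = (card A + 1) * card (?X d)"
    by (simp add: card_cartesian_product)
  also have "\<dots> \<le> (card A + 1) * (card A + 1) ^ d"
    using Suc.IH by (rule mult_le_mono2)
  finally show ?case by simp
qed

lemma card_traces_le:
  assumes "finite A" and vc: "\<And>B. finite B \<Longrightarrow> shatters F B \<Longrightarrow> card B \<le> d"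
  shows "card ((\<lambda>S. S \<inter> A) ` F) \<le> (card A + 1) ^ d"
proof -
  let ?T = "(\<lambda>S. S \<inter> A) ` F"
  have "card ?T \<le> card {B. B \<subseteq> A \<and> shatters ?T B}"
    using assms(1) by (intro card_le_card_shattered_subsets) auto
  also have "\<dots> \<le> card {B. B \<subseteq> A \<and> card B \<le> d}"
  proof (intro card_mono subsetI)
    fix B assume B: "B \<in> {B. B \<subseteq> A \<and> shatters ?T B}"
    then have "shatters F B"
      unfolding shatters_def by (auto simp: Int_assoc inf.absorb2 image_iff)
    then show "B \<in> {B. B \<subseteq> A \<and> card B \<le> d}"
      using B vc assms(1) finite_subset by blast
  qed (use assms(1) in simp)
  also have "\<dots> \<le> (card A + 1) ^ d"
    by (rule card_subsets_card_le[OF assms(1)])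
  finally show ?thesis .
qed

section \<open>Keisler measures and entropy\<close>

text \<open>Gibbs' inequality against the uniform distribution, one term at a time.\<close>

lemma neg_mult_ln_le:
  fixes p N :: real
  assumes "0 < p" and "0 < N"
  shows "- (p * ln p) \<le> p * ln N + 1 / N - p"
proof -
  have "ln (1 / (N * p)) \<le> 1 / (N * p) - 1"
    using assms by (intro ln_le_minus_one) simp
  also have "ln (1 / (N * p)) = - ln N - ln p"
    using assms by (simp add: ln_div ln_mult)
  finally have "p * (- ln N - ln p) \<le> p * (1 / (N * p) - 1)"
    using assms(1) by (intro mult_left_mono) auto
  then show ?thesis
    using assms by (simp add: algebra_simps)
qed

lemma part_entropy_le_ln_card:
  assumes "finite Q" and "\<And>C. C \<in> Q \<Longrightarrow> 0 \<le> \<mu> C" and "(\<Sum>C\<in>Q. \<mu> C) = 1"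
  shows "part_entropy \<mu> Q \<le> ln (card Q)"
proof -
  define N where "N = real (card Q)"
  have "Q \<noteq> {}" using assms(3) by auto
  then have N: "0 < N" using assms(1) by (simp add: N_def card_gt_0_iff)
  have "part_entropy \<mu> Q = (\<Sum>C\<in>Q. - (if \<mu> C = 0 then 0 else \<mu> C * ln (\<mu> C)))"
    by (simp add: part_entropy_def sum_negf)
  also have "\<dots> \<le> (\<Sum>C\<in>Q. \<mu> C * ln N + 1 / N - \<mu> C)"
  proof (rule sum_mono)
    fix C assume "C \<in> Q"
    then show "- (if \<mu> C = 0 then 0 else \<mu> C * ln (\<mu> C)) \<le> \<mu> C * ln N + 1 / N - \<mu> C"
      using assms(2)[of C] N neg_mult_ln_le[of "\<mu> C" N] by auto
  qed
  also have "\<dots> = (\<Sum>C\<in>Q. \<mu> C) * ln N + N * (1 / N) - (\<Sum>C\<in>Q. \<mu> C)"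
    by (simp add: sum.distrib sum_subtractf sum_distrib_right N_def)
  also have "\<dots> = ln N"
    using assms(3) N by simp
  finally show ?thesis by (simp add: N_def)
qed

lemma part_entropy_nonneg:
  assumes "finite Q" and "\<And>C. C \<in> Q \<Longrightarrow> 0 \<le> \<mu> C" and "(\<Sum>C\<in>Q. \<mu> C) = 1"
  shows "0 \<le> part_entropy \<mu> Q"
proof -
  have "(if \<mu> C = 0 then 0 else \<mu> C * ln (\<mu> C)) \<le> 0" if "C \<in> Q" for C
  proof -
    have "\<mu> C \<le> 1"
      using member_le_sum[of C Q \<mu>] that assms by simp
    then have "\<mu> C * ln (\<mu> C) \<le> 0" if "\<mu> C \<noteq> 0"
      using assms(2)[OF \<open>C \<in> Q\<close>] that by (intro mult_nonneg_nonpos) auto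
    then show ?thesis by simp
  qed
  then have "(\<Sum>C\<in>Q. if \<mu> C = 0 then 0 else \<mu> C * ln (\<mu> C)) \<le> 0"
    by (rule sum_nonpos)
  then show ?thesis
    unfolding part_entropy_def by linarith
qed

lemma ln_le_if_le_poly:
  assumes "1 \<le> k" and "N \<le> (k + 1) ^ e + 1"
  shows "ln (real N) \<le> (1 + real e) * ln 2 + real e * ln (real k)"
proof (cases "N = 0")
  case False
  have "real N \<le> real ((k + 1) ^ e + 1)"
    using assms(2) by (rule of_nat_mono)
  then have "real N \<le> (real k + 1) ^ e + 1"
    by (simp add: add.commute)
  moreover have "(real k + 1) ^ e \<le> (2 * real k) ^ e"
    using assms(1) by (intro power_mono) auto
  moreover have "1 \<le> (real k + 1) ^ e"
    by simp
  ultimately have "real N \<le> 2 * (2 * real k) ^ e"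
    by linarith
  then have "ln (real N) \<le> ln (2 * (2 * real k) ^ e)"
    using False assms(1) by (subst ln_le_cancel_iff) auto
  also have "\<dots> = (1 + real e) * ln 2 + real e * ln (real k)"
    using assms(1) by (simp add: ln_mult ln_realpow algebra_simps)
  finally show ?thesis .
qed (use assms(1) in simp)

lemma tendsto_div_real_zero_if_le_ln:
  fixes a :: "nat \<Rightarrow> real"
  assumes "\<And>k. 0 \<le> a k" and "\<And>k. 1 \<le> k \<Longrightarrow> a k \<le> c + e * ln (real k)"
  shows "(\<lambda>k. a k / real k) \<longlonglongrightarrow> 0"
proof (rule tendsto_sandwich[of "\<lambda>_. 0" _ _ "\<lambda>k. (c + e * ln (real k)) / real k"])
  show "\<forall>\<^sub>F k in sequentially. 0 \<le> a k / real k"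
    by (intro always_eventually allI divide_nonneg_nonneg assms(1)) simp
  show "\<forall>\<^sub>F k in sequentially. a k / real k \<le> (c + e * ln (real k)) / real k"
    by (intro eventually_sequentiallyI[of 1] divide_right_mono assms(2)) auto
  have "(\<lambda>k. ln (real k) / real k) \<longlonglongrightarrow> 0"
    using filterlim_compose[OF ln_x_over_x_tendsto_0 filterlim_real_sequentially] by simp
  then have "(\<lambda>k. c * inverse (real k) + e * (ln (real k) / real k)) \<longlonglongrightarrow> c * 0 + e * 0"
    by (intro tendsto_intros lim_inverse_n)
  moreover have "c * inverse (real k) + e * (ln (real k) / real k) = (c + e * ln (real k)) / real k" for k
    by (simp add: divide_inverse distrib_right)
  ultimately show "(\<lambda>k. (c + e * ln (real k)) / real k) \<longlonglongrightarrow> 0"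
    by simp
qed simp

lemma keisler_measure_Union:
  assumes "keisler_measure ar Rel n Gr \<mu>" and "finite Q"
    and "\<And>C. C \<in> Q \<Longrightarrow> def_subset ar Rel n Gr C" and "pairwise disjnt Q"
  shows "def_subset ar Rel n Gr (\<Union>Q) \<and> \<mu> (\<Union>Q) = (\<Sum>C\<in>Q. \<mu> C)"
  using assms(2-)
proof (induction Q rule: finite_induct)
  case empty
  have "def_subset ar Rel n Gr {}"
    by (simp add: def_subset_def definable_empty)
  moreover from this have "\<mu> {} = 0"
    using assms(1) unfolding keisler_measure_def by (metis add_cancel_right_right sup_bot.right_neutral inf_bot_left)
  ultimately show ?case by simp
next
  case (insert C Q)
  then have IH: "def_subset ar Rel n Gr (\<Union>Q)" "\<mu> (\<Union>Q) = (\<Sum>C\<in>Q. \<mu> C)"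
    and C: "def_subset ar Rel n Gr C" and disj: "C \<inter> \<Union>Q = {}"
    by (auto simp: pairwise_insert disjnt_def)
  have "def_subset ar Rel n Gr (C \<union> \<Union>Q)"
    using IH(1) C by (auto simp: def_subset_def intro: definable_Un)
  moreover have "\<mu> (C \<union> \<Union>Q) = \<mu> C + \<mu> (\<Union>Q)"
    using assms(1) IH(1) C disj unfolding keisler_measure_def by blast
  ultimately show ?case using IH(2) insert.hyps by simp
qed

lemma keisler_measure_partition:
  assumes "keisler_measure ar Rel n Gr \<mu>" and "def_partition ar Rel n Gr Q"
  shows "(\<Sum>C\<in>Q. \<mu> C) = 1" and "\<And>C. C \<in> Q \<Longrightarrow> 0 \<le> \<mu> C"
proof -
  have Q: "finite Q" "\<And>C. C \<in> Q \<Longrightarrow> def_subset ar Rel n Gr C" "pairwise disjnt Q" "\<Union>Q = carrier Gr"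
    using assms(2) unfolding def_partition_def by auto
  show "(\<Sum>C\<in>Q. \<mu> C) = 1"
    using keisler_measure_Union[OF assms(1) Q(1-3)] Q(4) assms(1) unfolding keisler_measure_def by simp
  show "0 \<le> \<mu> C" if "C \<in> Q" for C
    using assms(1) Q(2)[OF that] unfolding keisler_measure_def by blast
qed

lemma part_entropy_partition_bounds:
  assumes "keisler_measure ar Rel n Gr \<mu>" and "def_partition ar Rel n Gr Q"
  shows "0 \<le> part_entropy \<mu> Q \<and> part_entropy \<mu> Q \<le> ln (card Q)"
proof -
  have "finite Q"
    using assms(2) by (simp add: def_partition_def)
  with keisler_measure_partition[OF assms] show ?thesis
    using part_entropy_nonneg part_entropy_le_ln_card by blast
qed

section \<open>Joins of definable partitions under a group translation\<close>

lemma card_le_card_image_Union: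
  assumes "finite Q" and "pairwise disjnt Q" and "finite (p ` \<Union>Q)"
    and same: "\<And>C x z. C \<in> Q \<Longrightarrow> x \<in> C \<Longrightarrow> z \<in> \<Union>Q \<Longrightarrow> p z = p x \<Longrightarrow> z \<in> C"
  shows "card Q \<le> card (p ` \<Union>Q) + 1"
proof -
  let ?pick = "\<lambda>C. SOME x. x \<in> C"
  have pick: "?pick C \<in> C" if "C \<in> Q - {{}}" for C
    using that by (auto intro: someI)
  have "inj_on (\<lambda>C. p (?pick C)) (Q - {{}})"
  proof (rule inj_onI)
    fix C C' assume C: "C \<in> Q - {{}}" and C': "C' \<in> Q - {{}}" and "p (?pick C) = p (?pick C')"
    then have "?pick C \<in> C'"
      using same[of C' "?pick C'" "?pick C"] pick by blast
    then show "C = C'"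
      using assms(2) C C' pick[OF C] unfolding pairwise_def disjnt_def by blast
  qed
  moreover have "(\<lambda>C. p (?pick C)) ` (Q - {{}}) \<subseteq> p ` \<Union>Q"
    using pick by blast
  ultimately have "card (Q - {{}}) \<le> card (p ` \<Union>Q)"
    using assms(3) by (rule card_inj_on_le)
  then show ?thesis
    by (simp add: card_Diff_singleton_if split: if_splits)
qed

locale definable_group_in =
  fixes ar :: "'r \<Rightarrow> nat" and Rel :: "'r \<Rightarrow> 'a list set" and n :: nat
    and Gr :: "'a list monoid" (structure)
  assumes definable_group: "definable_group ar Rel n Gr"
begin

sublocale group Gr
  using definable_group by (simp add: definable_group_def)

lemma carrier_length: "x \<in> carrier Gr \<Longrightarrow> length x = n"
  using definable_group by (auto simp: definable_group_def)

lemma definable_carrier: "definable ar Rel n (carrier Gr)"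
  using definable_group by (simp add: definable_group_def)

definition mult_preimage :: "'a list set \<Rightarrow> 'a list set" where
  "mult_preimage C = {xs @ ys | xs ys. xs \<in> carrier Gr \<and> ys \<in> carrier Gr \<and> xs \<otimes> ys \<in> C}"

lemma append_mem_mult_preimage:
  assumes "length xs = n" and "length ys = n"
  shows "xs @ ys \<in> mult_preimage C \<longleftrightarrow> xs \<in> carrier Gr \<and> ys \<in> carrier Gr \<and> xs \<otimes> ys \<in> C"
proof
  assume "xs @ ys \<in> mult_preimage C"
  then obtain xs' ys' where eq: "xs @ ys = xs' @ ys'"
    and mem: "xs' \<in> carrier Gr" "ys' \<in> carrier Gr" "xs' \<otimes> ys' \<in> C"
    unfolding mult_preimage_def by blast
  have "length xs = length xs'"
    using assms(1) carrier_length[OF mem(1)] by simp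
  then have "xs = xs'" and "ys = ys'"
    using eq by (simp_all add: append_eq_append_conv)
  with mem show "xs \<in> carrier Gr \<and> ys \<in> carrier Gr \<and> xs \<otimes> ys \<in> C"
    by simp
qed (auto simp: mult_preimage_def)

lemma definable_mult_preimage:
  assumes "definable ar Rel n C"
  shows "definable ar Rel (n + n) (mult_preimage C)"
proof -
  let ?graph = "{xs @ ys @ zs | xs ys zs. xs \<in> carrier Gr \<and> ys \<in> carrier Gr \<and> zs = xs \<otimes> ys}"
  let ?E = "{ws. length ws = n + n + n \<and> drop (n + n) ws \<in> C}"
  have "definable ar Rel (n + n + n) (?graph \<inter> ?E)"
    using definable_group assms
    by (intro definable.inter definable_drop_prefix) (simp_all add: definable_group_def)
  from definable_exists_suffix[OF this]
  have "definable ar Rel (n + n)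
      {ws. length ws = n + n \<and> (\<exists>zs. length zs = n \<and> ws @ zs \<in> ?graph \<inter> ?E)}" .
  moreover have "{ws. length ws = n + n \<and> (\<exists>zs. length zs = n \<and> ws @ zs \<in> ?graph \<inter> ?E)}
      = mult_preimage C"
  proof (intro equalityI subsetI)
    fix ws assume "ws \<in> {ws. length ws = n + n \<and> (\<exists>zs. length zs = n \<and> ws @ zs \<in> ?graph \<inter> ?E)}"
    then obtain zs xs ys where len: "length ws = n + n"
      and "ws @ zs = xs @ ys @ xs \<otimes> ys" and mem: "xs \<in> carrier Gr" "ys \<in> carrier Gr"
      and zs: "drop (n + n) (ws @ zs) \<in> C"
      by blast
    then have eq: "ws @ zs = (xs @ ys) @ xs \<otimes> ys"
      by simp
    have "length ws = length (xs @ ys)"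
      using len mem by (simp add: carrier_length)
    then have "ws = xs @ ys" and "zs = xs \<otimes> ys"
      using append_eq_append_conv[of ws "xs @ ys" zs "xs \<otimes> ys"] eq by blast+
    with mem zs len show "ws \<in> mult_preimage C"
      unfolding mult_preimage_def by auto
  next
    fix ws assume "ws \<in> mult_preimage C"
    then obtain xs ys where ws: "ws = xs @ ys" and mem: "xs \<in> carrier Gr" "ys \<in> carrier Gr" "xs \<otimes> ys \<in> C"
      unfolding mult_preimage_def by blast
    have len: "length xs = n" "length ys = n" "length (xs \<otimes> ys) = n"
      using mem by (simp_all add: carrier_length)
    have "ws @ xs \<otimes> ys \<in> ?graph"
      using ws mem by auto
    moreover have "ws @ xs \<otimes> ys \<in> ?E"
      using ws mem len by simp
    ultimately show "ws \<in> {ws. length ws = n + n \<and> (\<exists>zs. length zs = n \<and> ws @ zs \<in> ?graph \<inter> ?E)}"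
      using ws len by auto
  qed
  ultimately show ?thesis by simp
qed

lemma translate_eq:
  assumes "h \<in> carrier Gr" and "C \<subseteq> carrier Gr"
  shows "translate Gr h C = {z \<in> carrier Gr. inv h \<otimes> z \<in> C}"
proof (intro equalityI subsetI)
  fix z assume "z \<in> translate Gr h C"
  then obtain c where c: "c \<in> C" and z: "z = h \<otimes> c"
    unfolding translate_def by blast
  then have "inv h \<otimes> z = c"
    using assms by (auto simp: m_assoc[symmetric])
  then show "z \<in> {z \<in> carrier Gr. inv h \<otimes> z \<in> C}"
    using assms c z by auto
next
  fix z assume z: "z \<in> {z \<in> carrier Gr. inv h \<otimes> z \<in> C}"
  then have "z = h \<otimes> (inv h \<otimes> z)"
    using assms(1) by (simp add: m_assoc[symmetric])
  then show "z \<in> translate Gr h C"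
    using z unfolding translate_def by blast
qed

lemma def_subset_translate:
  assumes "h \<in> carrier Gr" and "def_subset ar Rel n Gr C"
  shows "def_subset ar Rel n Gr (translate Gr h C)"
proof -
  have C: "definable ar Rel n C" "C \<subseteq> carrier Gr"
    using assms(2) by (auto simp: def_subset_def)
  have len: "length (inv h) = n"
    using assms(1) by (simp add: carrier_length)
  have "translate Gr h C = {xs. length xs = n \<and> inv h @ xs \<in> mult_preimage C}"
    using assms(1) C(2) len by (auto simp: translate_eq append_mem_mult_preimage carrier_length)
  moreover have "definable ar Rel n {xs. length xs = n \<and> inv h @ xs \<in> mult_preimage C}"
    using definable_fix_prefix[of ar Rel "inv h" n] definable_mult_preimage[OF C(1)] len by simp
  ultimately show ?thesis
    using assms(1) C(2) by (auto simp: def_subset_def translate_eq)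
qed

definition itinerary :: "'a list \<Rightarrow> nat \<Rightarrow> (nat \<Rightarrow> 'a list set) \<Rightarrow> 'a list set" where
  "itinerary g k f = {z \<in> carrier Gr. \<forall>i<k. g [^] i \<otimes> z \<in> f i}"

lemma join_iter_eq:
  assumes "g \<in> carrier Gr" and "\<Union>P \<subseteq> carrier Gr"
  shows "join_iter Gr g P k = {itinerary g k f | f. \<forall>i<k. f i \<in> P}"
proof -
  have "carrier Gr \<inter> (\<Inter>i<k. translate Gr (inv g [^] i) (f i)) = itinerary g k f"
    if f: "\<forall>i<k. f i \<in> P" for f
  proof -
    have "translate Gr (inv g [^] i) (f i) = {z \<in> carrier Gr. g [^] i \<otimes> z \<in> f i}" if "i < k" for i
    proof -
      have "f i \<subseteq> carrier Gr"
        using assms(2) f that by blast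
      then show ?thesis
        using assms(1) by (simp add: translate_eq nat_pow_inv)
    qed
    then show ?thesis
      unfolding itinerary_def by auto
  qed
  then show ?thesis
    unfolding join_iter_def by (intro Collect_cong) metis
qed

lemma finite_join_iter:
  assumes "g \<in> carrier Gr" and "def_partition ar Rel n Gr P"
  shows "finite (join_iter Gr g P k)"
proof -
  have P: "finite P" "\<Union>P \<subseteq> carrier Gr"
    using assms(2) by (auto simp: def_partition_def)
  have "join_iter Gr g P k \<subseteq> itinerary g k ` PiE {..<k} (\<lambda>_. P)"
  proof
    fix Q assume "Q \<in> join_iter Gr g P k"
    then obtain f where "\<forall>i<k. f i \<in> P" and "Q = itinerary g k f"
      unfolding join_iter_eq[OF assms(1) P(2)] by blast
    then show "Q \<in> itinerary g k ` PiE {..<k} (\<lambda>_. P)"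
      by (intro image_eqI[where x = "restrict f {..<k}"]) (auto simp: itinerary_def)
  qed
  moreover have "finite (PiE {..<k} (\<lambda>_. P))"
    using P(1) by (simp add: finite_PiE)
  ultimately show ?thesis
    by (rule finite_subset[OF _ finite_imageI])
qed

lemma def_subset_join_iter:
  assumes "g \<in> carrier Gr" and "def_partition ar Rel n Gr P" and "Q \<in> join_iter Gr g P k"
  shows "def_subset ar Rel n Gr Q"
proof -
  obtain f where f: "\<forall>i<k. f i \<in> P"
    and Q: "Q = carrier Gr \<inter> (\<Inter>i<k. translate Gr (inv g [^] i) (f i))"
    using assms(3) unfolding join_iter_def by blast
  have "def_subset ar Rel n Gr (translate Gr (inv g [^] i) (f i))" if "i < k" for i
    using assms(1,2) f that by (intro def_subset_translate) (auto simp: def_partition_def)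
  then have "definable ar Rel n Q"
    unfolding Q by (intro definable_Int_INT definable_carrier) (simp add: def_subset_def)
  then show ?thesis
    unfolding def_subset_def Q by blast
qed

lemma Union_join_iter:
  assumes "g \<in> carrier Gr" and "\<Union>P = carrier Gr"
  shows "\<Union>(join_iter Gr g P k) = carrier Gr"
proof (intro equalityI subsetI)
  fix x assume x: "x \<in> carrier Gr"
  have "\<exists>C\<in>P. g [^] i \<otimes> x \<in> C" for i :: nat
    using assms x by blast
  then obtain f where f: "\<And>i. f i \<in> P \<and> g [^] (i::nat) \<otimes> x \<in> f i"
    by metis
  then have "x \<in> itinerary g k f"
    using x unfolding itinerary_def by blast
  with f show "x \<in> \<Union>(join_iter Gr g P k)"
    unfolding join_iter_eq[OF assms(1) equalityD1[OF assms(2)]] by blast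
qed (auto simp: join_iter_eq[OF assms(1) equalityD1[OF assms(2)]] itinerary_def)

lemma pairwise_disjnt_join_iter:
  assumes "g \<in> carrier Gr" and "\<Union>P = carrier Gr" and "pairwise disjnt P"
  shows "pairwise disjnt (join_iter Gr g P k)"
proof (rule pairwiseI)
  fix Q Q' assume "Q \<in> join_iter Gr g P k" "Q' \<in> join_iter Gr g P k" "Q \<noteq> Q'"
  then obtain f f' where f: "\<forall>i<k. f i \<in> P" "Q = itinerary g k f"
    and f': "\<forall>i<k. f' i \<in> P" "Q' = itinerary g k f'"
    unfolding join_iter_eq[OF assms(1) equalityD1[OF assms(2)]] by blast
  have "f i = f' i" if "i < k" and "x \<in> Q" and "x \<in> Q'" for i x
    using that f f' assms(3) unfolding itinerary_def pairwise_def disjnt_def by blast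
  then have "x \<notin> Q'" if "x \<in> Q" for x
    using that \<open>Q \<noteq> Q'\<close> f f' unfolding itinerary_def by blast
  then show "disjnt Q Q'"
    by (auto simp: disjnt_def)
qed

lemma def_partition_join_iter:
  assumes "g \<in> carrier Gr" and "def_partition ar Rel n Gr P"
  shows "def_partition ar Rel n Gr (join_iter Gr g P k)"
proof -
  have "\<Union>P = carrier Gr" and "pairwise disjnt P"
    using assms(2) by (simp_all add: def_partition_def)
  then show ?thesis
    using finite_join_iter[OF assms] def_subset_join_iter[OF assms]
      Union_join_iter[OF assms(1)] pairwise_disjnt_join_iter[OF assms(1)]
    unfolding def_partition_def by blast
qed

definition visit_pattern :: "'a list \<Rightarrow> nat \<Rightarrow> 'a list set set \<Rightarrow> 'a list \<Rightarrow> 'a list set \<Rightarrow> 'a list set" where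
  "visit_pattern g k P x = (\<lambda>C\<in>P. {y \<in> (\<lambda>i. g [^] i) ` {..<k}. y \<otimes> x \<in> C})"

lemma mem_itinerary_if_same_visit_pattern:
  assumes "x \<in> itinerary g k f" and "\<forall>i<k. f i \<in> P" and "z \<in> carrier Gr"
    and "visit_pattern g k P z = visit_pattern g k P x"
  shows "z \<in> itinerary g k f"
proof -
  have "g [^] i \<otimes> z \<in> f i" if "i < k" for i
  proof -
    have "g [^] i \<in> visit_pattern g k P x (f i)"
      using assms(1,2) that unfolding visit_pattern_def itinerary_def by auto
    then have "g [^] i \<in> visit_pattern g k P z (f i)"
      using assms(4) by simp
    then show ?thesis
      using assms(2) that unfolding visit_pattern_def by auto
  qed
  then show ?thesis
    using assms(3) unfolding itinerary_def by blast
qed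

lemma card_join_iter_le_card_visit_patterns:
  assumes "g \<in> carrier Gr" and "def_partition ar Rel n Gr P"
  shows "card (join_iter Gr g P k) \<le> card (visit_pattern g k P ` carrier Gr) + 1"
proof -
  have P: "finite P" "\<Union>P = carrier Gr"
    using assms(2) by (auto simp: def_partition_def)
  have Q: "finite (join_iter Gr g P k)" "pairwise disjnt (join_iter Gr g P k)"
    "\<Union>(join_iter Gr g P k) = carrier Gr"
    using def_partition_join_iter[OF assms, of k] unfolding def_partition_def by blast+
  have "visit_pattern g k P ` carrier Gr \<subseteq> PiE P (\<lambda>_. Pow ((\<lambda>i. g [^] i) ` {..<k}))"
    unfolding visit_pattern_def by auto
  then have fin: "finite (visit_pattern g k P ` carrier Gr)"
    by (rule finite_subset) (simp add: finite_PiE P(1))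
  have same: "z \<in> Q"
    if cell: "Q \<in> join_iter Gr g P k" and x: "x \<in> Q" and z: "z \<in> carrier Gr"
      and pattern: "visit_pattern g k P z = visit_pattern g k P x" for Q x z
  proof -
    obtain f where f: "\<forall>i<k. f i \<in> P" "Q = itinerary g k f"
      using cell unfolding join_iter_eq[OF assms(1) equalityD1[OF P(2)]] by blast
    then show ?thesis
      using mem_itinerary_if_same_visit_pattern[OF _ f(1) z pattern] x by blast
  qed
  have "card (join_iter Gr g P k) \<le> card (visit_pattern g k P ` \<Union>(join_iter Gr g P k)) + 1"
  proof (rule card_le_card_image_Union[OF Q(1,2)])
    show "finite (visit_pattern g k P ` \<Union>(join_iter Gr g P k))"
      using fin unfolding Q(3) .
  next
    fix C x z assume "C \<in> join_iter Gr g P k" "x \<in> C" "z \<in> \<Union>(join_iter Gr g P k)"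
      "visit_pattern g k P z = visit_pattern g k P x"
    then show "z \<in> C"
      using same unfolding Q(3) by blast
  qed
  then show ?thesis
    unfolding Q(3) .
qed

lemma visit_pattern_mem_traces:
  assumes "g \<in> carrier Gr" and "x \<in> carrier Gr" and "C \<in> P"
  shows "visit_pattern g k P x C \<in> (\<lambda>S. S \<inter> (\<lambda>i. g [^] i) ` {..<k}) `
    {{ys. length ys = n \<and> ys @ zs \<in> mult_preimage C} | zs. length zs = n}"
proof -
  let ?A = "(\<lambda>i. g [^] i) ` {..<k}"
  have "y \<in> ?A \<Longrightarrow> y @ x \<in> mult_preimage C \<longleftrightarrow> y \<otimes> x \<in> C" for y
    using assms(1,2) by (auto simp: append_mem_mult_preimage carrier_length)
  then have "visit_pattern g k P x C = {ys. length ys = n \<and> ys @ x \<in> mult_preimage C} \<inter> ?A"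
    using assms(1,3) by (auto simp: visit_pattern_def carrier_length)
  then show ?thesis
    using carrier_length[OF assms(2)] by blast
qed

lemma card_visit_patterns_polynomial:
  assumes "NIP ar Rel" and "g \<in> carrier Gr" and "def_partition ar Rel n Gr P"
  shows "\<exists>e. \<forall>k. card (visit_pattern g k P ` carrier Gr) \<le> (k + 1) ^ e"
proof -
  define F where "F C = {{ys. length ys = n \<and> ys @ zs \<in> mult_preimage C} | zs. length zs = n}" for C
  have "\<exists>d. \<forall>B. finite B \<and> shatters (F C) B \<longrightarrow> card B \<le> d" if "C \<in> P" for C
  proof -
    have "definable ar Rel n C"
      using assms(3) that by (simp add: def_partition_def def_subset_def)
    then show ?thesis
      using assms(1) definable_mult_preimage unfolding NIP_def F_def by blast
  qed
  then obtain d where d: "\<And>C B. C \<in> P \<Longrightarrow> finite B \<Longrightarrow> shatters (F C) B \<Longrightarrow> card B \<le> d C"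
    by metis
  have "card (visit_pattern g k P ` carrier Gr) \<le> (k + 1) ^ (\<Sum>C\<in>P. d C)" for k
  proof -
    define A where "A = (\<lambda>i. g [^] i) ` {..<k}"
    define T where "T C = (\<lambda>S. S \<inter> A) ` F C" for C
    have finP: "finite P"
      using assms(3) by (simp add: def_partition_def)
    have finA: "finite A"
      unfolding A_def by simp
    have finT: "finite (T C)" for C
      unfolding T_def by (rule finite_subset[of _ "Pow A"]) (use finA in auto)
    have "card A \<le> k"
      unfolding A_def using card_image_le[of "{..<k}"] by simp
    then have T: "card (T C) \<le> (k + 1) ^ d C" if "C \<in> P" for C
      using card_traces_le[OF finA d[OF that]] unfolding T_def
      by (meson add_le_mono1 le_trans power_mono zero_le)
    have "visit_pattern g k P ` carrier Gr \<subseteq> PiE P T"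
      using visit_pattern_mem_traces[OF assms(2)]
      unfolding T_def F_def A_def by (auto simp: visit_pattern_def)
    then have "card (visit_pattern g k P ` carrier Gr) \<le> card (PiE P T)"
      using finP finT by (intro card_mono) (simp_all add: finite_PiE)
    also have "\<dots> = (\<Prod>C\<in>P. card (T C))"
      using finP by (rule card_PiE)
    also have "\<dots> \<le> (\<Prod>C\<in>P. (k + 1) ^ d C)"
      using T by (intro prod_mono) auto
    also have "\<dots> = (k + 1) ^ (\<Sum>C\<in>P. d C)"
      by (simp add: power_sum)
    finally show ?thesis .
  qed
  then show ?thesis by blast
qed

lemma card_join_iter_polynomial:
  assumes "NIP ar Rel" and "g \<in> carrier Gr" and "def_partition ar Rel n Gr P"
  shows "\<exists>e. \<forall>k. card (join_iter Gr g P k) \<le> (k + 1) ^ e + 1"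
  using card_visit_patterns_polynomial[OF assms] card_join_iter_le_card_visit_patterns[OF assms(2,3)]
  by (meson add_right_mono le_trans)

end

theorem mainTheorem3:
  fixes ar :: "'r \<Rightarrow> nat" and Rel :: "'r \<Rightarrow> 'a list set"
    and n :: nat and Gr :: "'a list monoid" and \<mu> :: "'a list set \<Rightarrow> real"
  assumes "NIP ar Rel"
    and "definable_group ar Rel n Gr"
    and "keisler_measure ar Rel n Gr \<mu>"
    and "invariant_measure ar Rel n Gr \<mu>"
  shows "\<forall>g \<in> carrier Gr. zero_entropy ar Rel n Gr \<mu> g"
proof (intro ballI)
  interpret definable_group_in ar Rel n Gr
    by unfold_locales (rule assms(2))
  fix g assume g: "g \<in> carrier Gr"
  show "zero_entropy ar Rel n Gr \<mu> g"
    unfolding zero_entropy_def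
  proof (intro allI impI)
    fix P assume P: "def_partition ar Rel n Gr P"
    obtain e where e: "\<And>k. card (join_iter Gr g P k) \<le> (k + 1) ^ e + 1"
      using card_join_iter_polynomial[OF assms(1) g P] by blast
    show "(\<lambda>k. part_entropy \<mu> (join_iter Gr g P k) / real k) \<longlonglongrightarrow> 0"
    proof (rule tendsto_div_real_zero_if_le_ln)
      fix k :: nat
      note bounds = part_entropy_partition_bounds[OF assms(3) def_partition_join_iter[OF g P, of k]]
      then show "0 \<le> part_entropy \<mu> (join_iter Gr g P k)"
        by blast
      assume "1 \<le> k"
      with bounds show "part_entropy \<mu> (join_iter Gr g P k) \<le> (1 + real e) * ln 2 + real e * ln (real k)"
        using ln_le_if_le_poly[OF _ e] by (meson order_trans)
    qed
  qed
qed

end
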